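(* Let $a_{n,1}$ denote the number of matchings of size $n$ with exactly one occurrence of the endhered pattern $21$. Then $a_{1,1}=0$, $a_{2,1}=1$, and for all $n\ge2$, $$a_{n+1,1}=2n\,(a_{n,1}+a_{n-1,1}).$$
   Context: A matching of size $n$ is a set of $n$ arcs $(a,b)$ with $1\le a<b\le 2n$ such that each point of $\{1,\dots,2n\}$ belongs to exactly one arc. An occurrence of the endhered pattern $21$ in a matching $\mu$ is a pair of arcs of $\mu$ of the form $(i+1,j+2),(i+2,j+1)$ (two nested arcs with consecutive starting points and consecutive ending points); the number of occurrences is the number of such pairs. *)

theory Defs
  imports Main
begin

definition is_matching :: "nat \<Rightarrow> (nat \<times> nat) set \<Rightarrow> bool" where
  "is_matching n M \<longleftrightarrow>
     M \<subseteq> {(a, b). 1 \<le> a \<and> a < b \<and> b \<le> 2 * n} \<and>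
     (\<forall>p \<in> {1..2 * n}. \<exists>!e. e \<in> M \<and> (fst e = p \<or> snd e = p))"

definition occ21 :: "(nat \<times> nat) set \<Rightarrow> nat" where
  "occ21 M = card {(i, j). (i + 1, j + 2) \<in> M \<and> (i + 2, j + 1) \<in> M}"

definition a1 :: "nat \<Rightarrow> nat" where
  "a1 n = card {M. is_matching n M \<and> occ21 M = 1}"

end

theory Submission imports Defs begin

(* Every matching of size n + 1 arises in exactly one way from a matching of size n by
   inserting a new point into one of its 2n + 1 gaps and joining it to the new last point 2n + 2.
   Each of the k occurrences of 21 owns two gaps, between its starts and between its ends, and
   inserting there destroys it; inserting just before the start of the arc ending at 2n creates
   one new occurrence; all other gaps keep the count.  Hence
     a(n+1,k) = 2(k+1) a(n,k+1) + (2n-2k) a(n,k) + a(n,k-1),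
   which is solved by a(n+1,k) = C(n,k) b(n+1-k) where b(j+2) = 2(j+1) b(j+1) + 2j b(j).
   For k = 1 this reads a(n+1,1) = n b(n), and the recurrence of b becomes the claimed one. *)

section \<open>Perfect matchings of a linearly ordered point set\<close>

definition perfect_matching :: "'a::linorder set \<Rightarrow> ('a \<times> 'a) set \<Rightarrow> bool" where
  "perfect_matching P M \<longleftrightarrow>
     (\<forall>(a, b) \<in> M. a < b \<and> a \<in> P \<and> b \<in> P) \<and>
     (\<forall>p \<in> P. \<exists>!e. e \<in> M \<and> (fst e = p \<or> snd e = p))"

lemma is_matching_iff_perfect_matching: "is_matching n M \<longleftrightarrow> perfect_matching {1..2*n} M"
  unfolding is_matching_def perfect_matching_def by auto

lemma perfect_matching_arcD:
  "perfect_matching P M \<Longrightarrow> (a, b) \<in> M \<Longrightarrow> a < b \<and> a \<in> P \<and> b \<in> P"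
  unfolding perfect_matching_def by blast

lemma perfect_matching_coverD:
  assumes "perfect_matching P M" "p \<in> P"
  obtains a b where "(a, b) \<in> M" "a = p \<or> b = p"
  using assms unfolding perfect_matching_def by (metis prod.collapse)

lemma perfect_matching_arc_eq:
  assumes "perfect_matching P M" "(a, b) \<in> M" "(c, d) \<in> M" "a = c \<or> a = d \<or> b = c \<or> b = d"
  shows "a = c \<and> b = d"
proof -
  have "a \<in> P" "b \<in> P" using perfect_matching_arcD[OF assms(1,2)] by auto
  then show ?thesis using assms unfolding perfect_matching_def by (metis fst_conv snd_conv prod.inject)
qed

lemma perfect_matchingI:
  assumes "\<And>a b. (a, b) \<in> M \<Longrightarrow> a < b \<and> a \<in> P \<and> b \<in> P"
    and "\<And>p. p \<in> P \<Longrightarrow> \<exists>a b. (a, b) \<in> M \<and> (a = p \<or> b = p)"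
    and "\<And>a b c d. (a, b) \<in> M \<Longrightarrow> (c, d) \<in> M \<Longrightarrow> a = c \<or> a = d \<or> b = c \<or> b = d \<Longrightarrow> a = c \<and> b = d"
  shows "perfect_matching P M"
  unfolding perfect_matching_def
proof (intro conjI)
  show "\<forall>(a, b) \<in> M. a < b \<and> a \<in> P \<and> b \<in> P" using assms(1) by blast
  show "\<forall>p \<in> P. \<exists>!e. e \<in> M \<and> (fst e = p \<or> snd e = p)"
  proof
    fix p assume "p \<in> P"
    then obtain a b where "(a, b) \<in> M" "a = p \<or> b = p" using assms(2) by blast
    show "\<exists>!e. e \<in> M \<and> (fst e = p \<or> snd e = p)"
    proof (rule ex1I[of _ "(a, b)"])
      fix e assume e: "e \<in> M \<and> (fst e = p \<or> snd e = p)"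
      obtain c d where "e = (c, d)" by fastforce
      with e have "(c, d) \<in> M" "c = a \<or> c = b \<or> d = a \<or> d = b"
        using \<open>a = p \<or> b = p\<close> by auto
      then show "e = (a, b)" using assms(3)[OF _ \<open>(a, b) \<in> M\<close>] \<open>e = (c, d)\<close> by blast
    qed (use \<open>(a, b) \<in> M\<close> \<open>a = p \<or> b = p\<close> in auto)
  qed
qed

lemma perfect_matching_image:
  assumes M: "perfect_matching P M" and f: "strict_mono_on P f"
  shows "perfect_matching (f ` P) (map_prod f f ` M)"
proof (rule perfect_matchingI)
  fix a b assume "(a, b) \<in> map_prod f f ` M"
  then obtain x y where xy: "(x, y) \<in> M" "a = f x" "b = f y" by auto
  have "x < y" "x \<in> P" "y \<in> P" using perfect_matching_arcD[OF M xy(1)] by auto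
  then show "a < b \<and> a \<in> f ` P \<and> b \<in> f ` P"
    using f xy(2,3) by (auto simp: strict_mono_on_def)
next
  fix p assume "p \<in> f ` P"
  then obtain q where "q \<in> P" "p = f q" by blast
  then obtain x y where "(x, y) \<in> M" "x = q \<or> y = q" using perfect_matching_coverD[OF M] by metis
  then have "(f x, f y) \<in> map_prod f f ` M" "f x = p \<or> f y = p" using \<open>p = f q\<close> by auto
  then show "\<exists>a b. (a, b) \<in> map_prod f f ` M \<and> (a = p \<or> b = p)" by metis
next
  fix a b c d assume ab: "(a, b) \<in> map_prod f f ` M" and cd: "(c, d) \<in> map_prod f f ` M"
    and shared: "a = c \<or> a = d \<or> b = c \<or> b = d"
  obtain x y u v where xy: "(x, y) \<in> M" "a = f x" "b = f y" and uv: "(u, v) \<in> M" "c = f u" "d = f v"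
    using ab cd by auto
  have P: "x \<in> P" "y \<in> P" "u \<in> P" "v \<in> P"
    using perfect_matching_arcD[OF M xy(1)] perfect_matching_arcD[OF M uv(1)] by auto
  have "inj_on f P" using f by (rule strict_mono_on_imp_inj_on)
  moreover have "f x = f u \<or> f x = f v \<or> f y = f u \<or> f y = f v" using shared xy uv by simp
  ultimately have "x = u \<or> x = v \<or> y = u \<or> y = v" using P by (simp add: inj_on_eq_iff)
  then have "x = u \<and> y = v" by (rule perfect_matching_arc_eq[OF M xy(1) uv(1)])
  then show "a = c \<and> b = d" using xy(2,3) uv(2,3) by blast
qed

lemma perfect_matching_insert:
  assumes M: "perfect_matching P M" and ab: "a < b" "a \<notin> P" "b \<notin> P"
  shows "perfect_matching (insert a (insert b P)) (insert (a, b) M)"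
proof (rule perfect_matchingI)
  fix x y assume "(x, y) \<in> insert (a, b) M"
  then consider "(x, y) = (a, b)" | "(x, y) \<in> M" by blast
  then show "x < y \<and> x \<in> insert a (insert b P) \<and> y \<in> insert a (insert b P)"
    by cases (use ab perfect_matching_arcD[OF M, of x y] in auto)
next
  fix p assume "p \<in> insert a (insert b P)"
  then show "\<exists>x y. (x, y) \<in> insert (a, b) M \<and> (x = p \<or> y = p)"
    using perfect_matching_coverD[OF M, of p] by blast
next
  fix x y u v assume xy: "(x, y) \<in> insert (a, b) M" and uv: "(u, v) \<in> insert (a, b) M"
    and shared: "x = u \<or> x = v \<or> y = u \<or> y = v"
  have new_arc_isolated: "\<not> (x = a \<or> x = b \<or> y = a \<or> y = b)" if "(x, y) \<in> M" for x y
    using perfect_matching_arcD[OF M that] ab by auto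
  show "x = u \<and> y = v"
  proof (cases "(x, y) = (a, b)"; cases "(u, v) = (a, b)")
    assume "(x, y) \<noteq> (a, b)" "(u, v) \<noteq> (a, b)"
    then show ?thesis using xy uv shared perfect_matching_arc_eq[OF M, of x y u v] by blast
  qed (use xy uv shared new_arc_isolated in auto)
qed

lemma perfect_matching_remove:
  assumes M: "perfect_matching P M" and ab: "(a, b) \<in> M"
  shows "perfect_matching (P - {a, b}) (M - {(a, b)})"
proof (rule perfect_matchingI)
  show "x < y \<and> x \<in> P - {a, b} \<and> y \<in> P - {a, b}" if "(x, y) \<in> M - {(a, b)}" for x y
    using that perfect_matching_arcD[OF M] perfect_matching_arc_eq[OF M _ ab] by blast
  fix p assume "p \<in> P - {a, b}"
  then obtain x y where xy: "(x, y) \<in> M" "x = p \<or> y = p" using perfect_matching_coverD[OF M] by blast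
  then have "(x, y) \<noteq> (a, b)" using \<open>p \<in> P - {a, b}\<close> by auto
  then show "\<exists>x y. (x, y) \<in> M - {(a, b)} \<and> (x = p \<or> y = p)" using xy by blast
next
  show "x = u \<and> y = v"
    if "(x, y) \<in> M - {(a, b)}" "(u, v) \<in> M - {(a, b)}" "x = u \<or> x = v \<or> y = u \<or> y = v" for x y u v
    using that perfect_matching_arc_eq[OF M] by blast
qed

lemma finite_perfect_matchings: "finite P \<Longrightarrow> finite {M. perfect_matching P M}"
  by (rule finite_subset[of _ "Pow (P \<times> P)"]) (auto dest: perfect_matching_arcD)

lemma perfect_matching_finite: "finite P \<Longrightarrow> perfect_matching P M \<Longrightarrow> finite M"
  by (rule finite_subset[of _ "P \<times> P"]) (auto dest: perfect_matching_arcD)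

section \<open>Inserting an arc that ends at the new last point\<close>

definition lift :: "nat \<Rightarrow> nat \<Rightarrow> nat" where
  "lift g p = (if p \<le> g then p else Suc p)"

definition unlift :: "nat \<Rightarrow> nat \<Rightarrow> nat" where
  "unlift g p = (if p \<le> g then p else p - 1)"

lemma strict_mono_on_lift: "strict_mono_on A (lift g)"
  by (rule strict_mono_onI) (auto simp: lift_def)

lemma strict_mono_on_unlift: "strict_mono_on (- {Suc g}) (unlift g)"
  by (rule strict_mono_onI) (auto simp: unlift_def)

lemma lift_neq_Suc: "lift g p \<noteq> Suc g"
  by (simp add: lift_def)

lemma lift_Suc: "p \<noteq> g \<Longrightarrow> lift g (Suc p) = Suc (lift g p)"
  by (simp add: lift_def)

lemma Suc_lift_eq_liftD: "Suc (lift g p) = lift g q \<Longrightarrow> q = Suc p \<and> p \<noteq> g"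
  by (auto simp: lift_def split: if_splits)

lemma unlift_lift: "unlift g (lift g p) = p"
  by (simp add: lift_def unlift_def)

lemma lift_unlift: "p \<noteq> Suc g \<Longrightarrow> lift g (unlift g p) = p"
  by (auto simp: lift_def unlift_def)

lemma lift_image: "g \<le> m \<Longrightarrow> lift g ` {1..m} = {1..Suc m} - {Suc g}"
proof (intro equalityI subsetI)
  fix p assume "p \<in> {1..Suc m} - {Suc g}" "g \<le> m"
  then have "unlift g p \<in> {1..m}" "lift g (unlift g p) = p"
    by (auto simp: unlift_def lift_def)
  then show "p \<in> lift g ` {1..m}" by (metis imageI)
qed (auto simp: lift_def)

lemma unlift_image:
  assumes "g \<le> m"
  shows "unlift g ` ({1..Suc m} - {Suc g}) = {1..m}"
proof -
  have "unlift g ` lift g ` {1..m} = {1..m}" by (simp add: image_image unlift_lift)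
  then show ?thesis using lift_image[OF assms] by simp
qed

definition insert_arc :: "nat \<Rightarrow> nat \<Rightarrow> (nat \<times> nat) set \<Rightarrow> (nat \<times> nat) set" where
  "insert_arc n g M = insert (Suc g, 2*n + 2) (map_prod (lift g) (lift g) ` M)"

lemma is_matching_insert_arc:
  assumes M: "is_matching n M" and g: "g \<le> 2*n"
  shows "is_matching (Suc n) (insert_arc n g M)"
proof -
  have "perfect_matching (lift g ` {1..2*n}) (map_prod (lift g) (lift g) ` M)"
    using M strict_mono_on_lift by (simp add: is_matching_iff_perfect_matching perfect_matching_image)
  then have "perfect_matching ({1..2*n + 1} - {Suc g}) (map_prod (lift g) (lift g) ` M)"
    using lift_image[OF g] by simp
  then have "perfect_matching (insert (Suc g) (insert (2*n + 2) ({1..2*n + 1} - {Suc g}))) (insert_arc n g M)"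
    unfolding insert_arc_def using g by (intro perfect_matching_insert) auto
  moreover have "insert (Suc g) (insert (2*n + 2) ({1..2*n + 1} - {Suc g})) = {1..2 * Suc n}"
    using g by auto
  ultimately show ?thesis by (simp add: is_matching_iff_perfect_matching)
qed

lemma new_arc_notin_lifted:
  assumes "is_matching n M"
  shows "(a, 2*n + 2) \<notin> map_prod (lift g) (lift g) ` M"
proof
  assume "(a, 2*n + 2) \<in> map_prod (lift g) (lift g) ` M"
  then obtain x y where "(x, y) \<in> M" "lift g y = 2*n + 2" by auto
  moreover have "lift g y \<le> Suc y" by (simp add: lift_def)
  ultimately show False
    using assms perfect_matching_arcD by (fastforce simp: is_matching_iff_perfect_matching)
qed

lemma insert_arc_inj:
  assumes M: "is_matching n M" and M': "is_matching n M'"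
    and eq: "insert_arc n g M = insert_arc n g' M'"
  shows "g = g' \<and> M = M'"
proof -
  have "(Suc g, 2*n + 2) \<in> insert_arc n g M" by (simp add: insert_arc_def)
  then have "(Suc g, 2*n + 2) \<in> insert_arc n g' M'" by (simp only: eq)
  then have g: "g = g'" using new_arc_notin_lifted[OF M'] by (auto simp: insert_arc_def)
  have "map_prod (lift g) (lift g) ` M = map_prod (lift g) (lift g) ` M'"
    using eq new_arc_notin_lifted[OF M] new_arc_notin_lifted[OF M'] unfolding insert_arc_def g
    by (metis insert_ident)
  moreover have "inj (map_prod (lift g) (lift g))"
    using strict_mono_on_imp_inj_on[OF strict_mono_on_lift] by (intro prod.inj_map)
  ultimately show ?thesis using g by (simp add: inj_image_eq_iff)
qed

lemma matching_Suc_obtains_insert_arc: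
  assumes M': "is_matching (Suc n) M'"
  obtains g M where "g \<le> 2*n" "is_matching n M" "M' = insert_arc n g M"
proof -
  have M'P: "perfect_matching {1..2*n + 2} M'" using M' by (simp add: is_matching_iff_perfect_matching)
  obtain a b where ab: "(a, b) \<in> M'" "a = 2*n + 2 \<or> b = 2*n + 2"
    using perfect_matching_coverD[OF M'P, of "2*n + 2"] by auto
  moreover have "1 \<le> a" "a < b" "b \<le> 2*n + 2" using perfect_matching_arcD[OF M'P ab(1)] by auto
  ultimately have "b = 2*n + 2" "a = Suc (a - 1)" "a - 1 \<le> 2*n" by auto
  then obtain g where g: "(Suc g, 2*n + 2) \<in> M'" "g \<le> 2*n" using ab(1) by metis
  define R where "R = M' - {(Suc g, 2*n + 2)}"
  define M where "M = map_prod (unlift g) (unlift g) ` R"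
  have "perfect_matching ({1..2*n + 2} - {Suc g, 2*n + 2}) R"
    unfolding R_def by (rule perfect_matching_remove[OF M'P g(1)])
  moreover have "{1..2*n + 2} - {Suc g, 2*n + 2} = {1..Suc (2*n)} - {Suc g}" by auto
  ultimately have R_matching: "perfect_matching ({1..Suc (2*n)} - {Suc g}) R" by simp
  then have "perfect_matching (unlift g ` ({1..Suc (2*n)} - {Suc g})) M"
    unfolding M_def
    by (rule perfect_matching_image) (rule monotone_on_subset[OF strict_mono_on_unlift], blast)
  then have "is_matching n M" unfolding unlift_image[OF g(2)] is_matching_iff_perfect_matching .
  moreover have "map_prod (lift g) (lift g) ` M = R"
  proof -
    have "map_prod (lift g) (lift g) (map_prod (unlift g) (unlift g) e) = e" if "e \<in> R" for e
      using perfect_matching_arcD[OF R_matching] that by (cases e) (auto simp: lift_unlift)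
    then show ?thesis unfolding M_def image_image by simp
  qed
  then have "M' = insert_arc n g M" using g(1) by (auto simp: insert_arc_def R_def)
  ultimately show thesis using that g(2) by blast
qed

lemma bij_betw_insert_arc:
  "bij_betw (\<lambda>(M, g). insert_arc n g M) ({M. is_matching n M} \<times> {0..2*n}) {M'. is_matching (Suc n) M'}"
proof (rule bij_betwI')
  fix x y assume "x \<in> {M. is_matching n M} \<times> {0..2*n}" "y \<in> {M. is_matching n M} \<times> {0..2*n}"
  then obtain M g M2 g2 where "x = (M, g)" "y = (M2, g2)" "is_matching n M" "is_matching n M2" by auto
  then show "((\<lambda>(M, g). insert_arc n g M) x = (\<lambda>(M, g). insert_arc n g M) y) \<longleftrightarrow> x = y"
    using insert_arc_inj[of n M M2 g g2] by auto
next
  fix x assume "x \<in> {M. is_matching n M} \<times> {0..2*n}"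
  then show "(\<lambda>(M, g). insert_arc n g M) x \<in> {M'. is_matching (Suc n) M'}"
    using is_matching_insert_arc by auto
next
  fix M' assume "M' \<in> {M'. is_matching (Suc n) M'}"
  then obtain g M where "g \<le> 2*n" "is_matching n M" "M' = insert_arc n g M"
    using matching_Suc_obtains_insert_arc by blast
  then show "\<exists>x \<in> {M. is_matching n M} \<times> {0..2*n}. M' = (\<lambda>(M, g). insert_arc n g M) x" by force
qed

lemma finite_matchings: "finite {M. is_matching n M}"
  using finite_perfect_matchings[of "{1..2*n}"] by (simp add: is_matching_iff_perfect_matching)

lemma card_matchings_Suc:
  "card {M'. is_matching (Suc n) M' \<and> Q M'} =
     (\<Sum>M | is_matching n M. card {g \<in> {0..2*n}. Q (insert_arc n g M)})"
proof -
  let ?A = "{M. is_matching n M} \<times> {0..2*n}"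
  let ?S = "SIGMA M:{M. is_matching n M}. {g \<in> {0..2*n}. Q (insert_arc n g M)}"
  have "bij_betw (\<lambda>(M, g). insert_arc n g M) {x \<in> ?A. Q (case x of (M, g) \<Rightarrow> insert_arc n g M)}
      {M' \<in> {M'. is_matching (Suc n) M'}. Q M'}"
    by (rule bij_betw_Collect[OF bij_betw_insert_arc]) simp
  moreover have "{x \<in> ?A. Q (case x of (M, g) \<Rightarrow> insert_arc n g M)} = ?S" by auto
  ultimately have "card {M'. is_matching (Suc n) M' \<and> Q M'} = card ?S"
    by (simp add: bij_betw_same_card)
  also have "\<dots> = (\<Sum>M | is_matching n M. card {g \<in> {0..2*n}. Q (insert_arc n g M)})"
    using finite_matchings by simp
  finally show ?thesis .
qed

section \<open>Occurrences of 21 under insertion\<close>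

(* The occurrence (i+1, j+2), (i+2, j+1) counted by occ21 is recorded as (i+1, j+1), its first
   start and first end point; a point inserted right after g splits it iff g is one of them. *)
definition occs :: "(nat \<times> nat) set \<Rightarrow> (nat \<times> nat) set" where
  "occs M = {(s, t). (s, Suc t) \<in> M \<and> (Suc s, t) \<in> M}"

definition occ_gaps :: "(nat \<times> nat) set \<Rightarrow> nat set" where
  "occ_gaps M = fst ` occs M \<union> snd ` occs M"

lemma occ21_eq_card_occs:
  assumes "is_matching n M"
  shows "occ21 M = card (occs M)"
proof -
  have "occs M = map_prod Suc Suc ` {(i, j). (i + 1, j + 2) \<in> M \<and> (i + 2, j + 1) \<in> M}"
  proof (intro equalityI subsetI)
    fix x assume "x \<in> occs M"
    then obtain s t where x: "x = (s, t)" "(s, Suc t) \<in> M" "(Suc s, t) \<in> M" by (auto simp: occs_def)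
    then have "s = Suc (s - 1)" "t = Suc (t - 1)"
      using assms perfect_matching_arcD by (fastforce simp: is_matching_iff_perfect_matching)+
    then show "x \<in> map_prod Suc Suc ` {(i, j). (i + 1, j + 2) \<in> M \<and> (i + 2, j + 1) \<in> M}"
      using x by (intro image_eqI[of _ _ "(s - 1, t - 1)"]) auto
  qed (auto simp: occs_def)
  moreover have "inj (map_prod Suc Suc)" by (simp add: prod.inj_map)
  ultimately show ?thesis by (simp add: occ21_def card_image inj_on_subset[of _ UNIV])
qed

lemma finite_occs: "finite M \<Longrightarrow> finite (occs M)"
  unfolding occs_def by (rule finite_subset[of _ "fst ` M \<times> snd ` M"]) (auto intro: rev_image_eqI)

lemma occs_points_distinct:
  assumes M: "perfect_matching P M" and st: "(s, t) \<in> occs M" and st': "(s', t') \<in> occs M"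
  shows "s \<noteq> t'" "s = s' \<longleftrightarrow> t = t'"
proof -
  have arcs: "(s, Suc t) \<in> M" "(Suc s, t) \<in> M" "(s', Suc t') \<in> M" "(Suc s', t') \<in> M"
    using st st' by (auto simp: occs_def)
  show "s \<noteq> t'"
  proof
    assume "s = t'"
    then have "Suc t = t'" using perfect_matching_arc_eq[OF M arcs(1) arcs(4)] by blast
    moreover have "s < Suc t" using perfect_matching_arcD[OF M arcs(1)] by blast
    ultimately show False using \<open>s = t'\<close> by linarith
  qed
  show "s = s' \<longleftrightarrow> t = t'"
  proof
    assume "s = s'"
    then show "t = t'" using perfect_matching_arc_eq[OF M arcs(1) arcs(3)] by blast
  next
    assume "t = t'"
    then show "s = s'" using perfect_matching_arc_eq[OF M arcs(2) arcs(4)] by blast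
  qed
qed

lemma card_occ_gaps:
  assumes M: "perfect_matching P M" "finite M"
  shows "card (occ_gaps M) = 2 * card (occs M)"
proof -
  have "inj_on fst (occs M)" "inj_on snd (occs M)"
    using occs_points_distinct(2)[OF M(1)] by (auto intro!: inj_onI)
  moreover have "fst ` occs M \<inter> snd ` occs M = {}"
    using occs_points_distinct(1)[OF M(1)] by fastforce
  ultimately show ?thesis
    unfolding occ_gaps_def using finite_occs[OF M(2)] by (simp add: card_Un_disjoint card_image)
qed

lemma occ_gaps_subset: "perfect_matching P M \<Longrightarrow> occ_gaps M \<subseteq> P"
  unfolding occ_gaps_def occs_def by (auto dest: perfect_matching_arcD)

lemma card_occs_avoiding:
  assumes M: "perfect_matching P M" "finite M"
  shows "card {(s, t) \<in> occs M. s \<noteq> g \<and> t \<noteq> g} =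
    (if g \<in> occ_gaps M then card (occs M) - 1 else card (occs M))"
proof (cases "g \<in> occ_gaps M")
  case True
  then obtain s0 t0 where o: "(s0, t0) \<in> occs M" "g = s0 \<or> g = t0" by (auto simp: occ_gaps_def)
  have "{(s, t) \<in> occs M. s \<noteq> g \<and> t \<noteq> g} = occs M - {(s0, t0)}"
  proof (intro equalityI subsetI)
    fix x assume "x \<in> occs M - {(s0, t0)}"
    moreover obtain s t where "x = (s, t)" by fastforce
    ultimately have st: "(s, t) \<in> occs M" "(s, t) \<noteq> (s0, t0)" by auto
    have "s \<noteq> s0" "t \<noteq> t0" using occs_points_distinct(2)[OF M(1) st(1) o(1)] st(2) by auto
    moreover have "s \<noteq> t0" "t \<noteq> s0"
      using occs_points_distinct(1)[OF M(1) st(1) o(1)] occs_points_distinct(1)[OF M(1) o(1) st(1)] by auto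
    ultimately show "x \<in> {(s, t) \<in> occs M. s \<noteq> g \<and> t \<noteq> g}" using o(2) st(1) \<open>x = (s, t)\<close> by auto
  qed (use o(2) in auto)
  then show ?thesis using True o(1) finite_occs[OF M(2)] by simp
next
  case False
  then have "{(s, t) \<in> occs M. s \<noteq> g \<and> t \<noteq> g} = occs M" by (force simp: occ_gaps_def)
  then show ?thesis using False by simp
qed

lemma last_arc_notin_occ_gaps:
  assumes M: "perfect_matching P M" and last: "(Suc g, m) \<in> M" and max: "\<forall>p \<in> P. p \<le> m"
  shows "g \<notin> occ_gaps M"
proof
  assume "g \<in> occ_gaps M"
  then obtain s t where "(s, t) \<in> occs M" "g = s \<or> g = t" by (auto simp: occ_gaps_def)
  then have arcs: "(s, Suc t) \<in> M" "(Suc s, t) \<in> M" and "g = s \<or> g = t" by (auto simp: occs_def)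
  then consider "g = s" | "g = t" by blast
  then show False
  proof cases
    case 1
    then have "t = m" using perfect_matching_arc_eq[OF M arcs(2) last] by blast
    moreover have "Suc t \<in> P" using perfect_matching_arcD[OF M arcs(1)] by blast
    ultimately show False using max by fastforce
  next
    case 2
    then have "s = Suc t" using perfect_matching_arc_eq[OF M arcs(1) last] by blast
    moreover have "Suc s < t" using perfect_matching_arcD[OF M arcs(2)] by blast
    ultimately show False by linarith
  qed
qed

lemma lift_occ_in_occs_insert_arc:
  assumes "(s, t) \<in> occs M" "s \<noteq> g" "t \<noteq> g"
  shows "(lift g s, lift g t) \<in> occs (insert_arc n g M)"
proof -
  have "(lift g s, lift g (Suc t)) \<in> insert_arc n g M" "(lift g (Suc s), lift g t) \<in> insert_arc n g M"
    using assms(1) unfolding occs_def insert_arc_def by (auto intro: rev_image_eqI)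
  then show ?thesis using assms(2,3) by (simp add: occs_def lift_Suc)
qed

lemma new_occ_in_occs_insert_arc:
  assumes M: "is_matching n M" and last: "(Suc g, 2*n) \<in> M"
  shows "(Suc g, 2*n + 1) \<in> occs (insert_arc n g M)"
proof -
  have "Suc g < 2*n"
    using perfect_matching_arcD[OF M[unfolded is_matching_iff_perfect_matching] last] by blast
  then have "(lift g (Suc g), lift g (2*n)) = (Suc (Suc g), 2*n + 1)" by (simp add: lift_def)
  moreover have "(lift g (Suc g), lift g (2*n)) \<in> insert_arc n g M"
    using last unfolding insert_arc_def by (auto intro: rev_image_eqI)
  ultimately show ?thesis by (simp add: occs_def insert_arc_def)
qed

lemma occs_insert_arcE:
  assumes M: "is_matching n M" and g: "g \<le> 2*n" and st: "(s, t) \<in> occs (insert_arc n g M)"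
  obtains (lifted) s' t' where "(s', t') \<in> occs M" "s' \<noteq> g" "t' \<noteq> g" "s = lift g s'" "t = lift g t'"
    | (new) "(Suc g, 2*n) \<in> M" "s = Suc g" "t = 2*n + 1"
proof -
  let ?L = "map_prod (lift g) (lift g) ` M"
  have arcs: "(s, Suc t) \<in> insert_arc n g M" "(Suc s, t) \<in> insert_arc n g M"
    using st by (auto simp: occs_def)
  have "Suc t \<le> 2*n + 2"
    using perfect_matching_arcD[OF is_matching_insert_arc[OF M g, unfolded is_matching_iff_perfect_matching]
        arcs(1)] by simp
  then have "(Suc s, t) \<in> ?L" using arcs(2) by (auto simp: insert_arc_def)
  then obtain x' y' where xy': "(x', y') \<in> M" "Suc s = lift g x'" "t = lift g y'" by auto
  have bounds: "x \<le> 2*n" "y \<le> 2*n" if "(x, y) \<in> M" for x y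
    using perfect_matching_arcD[OF M[unfolded is_matching_iff_perfect_matching] that] by auto
  consider "(s, Suc t) = (Suc g, 2*n + 2)" | "(s, Suc t) \<in> ?L"
    using arcs(1) unfolding insert_arc_def by (rule insertE)
  then show thesis
  proof cases
    case 1
    then have "x' = Suc g" "y' = 2*n" using xy' bounds[OF xy'(1)] by (auto simp: lift_def split: if_splits)
    then show thesis using new 1 xy'(1) by simp
  next
    case 2
    then obtain x y where xy: "(x, y) \<in> M" "s = lift g x" "Suc t = lift g y" by auto
    have "x' = Suc x" "x \<noteq> g" using Suc_lift_eq_liftD xy(2) xy'(2) by metis+
    moreover have "y = Suc y'" "y' \<noteq> g" using Suc_lift_eq_liftD xy(3) xy'(3) by metis+
    ultimately have "(x, y') \<in> occs M" using xy(1) xy'(1) by (simp add: occs_def)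
    then show thesis using lifted \<open>x \<noteq> g\<close> \<open>y' \<noteq> g\<close> xy(2) xy'(3) by blast
  qed
qed

lemma occ21_insert_arc:
  assumes M: "is_matching n M" and g: "g \<le> 2*n" and last: "(Suc g0, 2*n) \<in> M"
  shows "occ21 (insert_arc n g M) =
    (if g \<in> occ_gaps M then occ21 M - 1 else occ21 M) + (if g = g0 then 1 else 0)"
proof -
  have MP: "perfect_matching {1..2*n} M" using M by (simp add: is_matching_iff_perfect_matching)
  let ?A = "{(s, t) \<in> occs M. s \<noteq> g \<and> t \<noteq> g}"
  let ?new = "if g = g0 then {(Suc g, 2*n + 1)} else {}"
  have last_iff: "(Suc g, 2*n) \<in> M \<longleftrightarrow> g = g0"
    using perfect_matching_arc_eq[OF MP _ last] last by blast
  have "occs (insert_arc n g M) = map_prod (lift g) (lift g) ` ?A \<union> ?new"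
  proof (intro equalityI subsetI)
    fix x assume x: "x \<in> occs (insert_arc n g M)"
    obtain s t where st: "x = (s, t)" by fastforce
    show "x \<in> map_prod (lift g) (lift g) ` ?A \<union> ?new"
    proof (rule occs_insert_arcE[OF M g x[unfolded st]])
      fix s' t' assume "(s', t') \<in> occs M" "s' \<noteq> g" "t' \<noteq> g" "s = lift g s'" "t = lift g t'"
      then show ?thesis using st by force
    next
      assume "(Suc g, 2*n) \<in> M" "s = Suc g" "t = 2*n + 1"
      then show ?thesis using st last_iff by simp
    qed
  next
    fix x assume "x \<in> map_prod (lift g) (lift g) ` ?A \<union> ?new"
    then show "x \<in> occs (insert_arc n g M)"
      using lift_occ_in_occs_insert_arc new_occ_in_occs_insert_arc[OF M] last_iff
      by (auto split: if_splits)
  qed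
  moreover have "map_prod (lift g) (lift g) ` ?A \<inter> ?new = {}" using lift_neq_Suc[symmetric] by auto
  moreover have "inj_on (map_prod (lift g) (lift g)) ?A"
    using strict_mono_on_imp_inj_on[OF strict_mono_on_lift] by (intro inj_on_subset[OF prod.inj_map]) auto
  moreover have "finite ?A"
    using finite_occs[OF perfect_matching_finite[OF _ MP]] by (simp add: case_prod_unfold)
  ultimately have "card (occs (insert_arc n g M)) = card ?A + (if g = g0 then 1 else 0)"
    by (simp add: card_Un_disjoint card_image)
  then show ?thesis
    using card_occs_avoiding[OF MP perfect_matching_finite[OF _ MP]]
      occ21_eq_card_occs[OF M] occ21_eq_card_occs[OF is_matching_insert_arc[OF M g]] by simp
qed

lemma card_level_set_split:
  assumes A: "finite A" and D: "D \<subseteq> A" "card D = 2 * c" and b: "b \<in> A - D"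
    and f: "\<And>g. g \<in> A \<Longrightarrow> f g = (if g \<in> D then c - 1 else c) + (if g = b then 1 else 0)"
  shows "card {g \<in> A. f g = k} =
    (if c = k + 1 then 2 * (k + 1) else 0) + (if c = k then card A - 2 * k - 1 else 0) +
    (if c + 1 = k then 1 else 0)"
proof -
  define X1 where "X1 = {g \<in> D. c - 1 = k}"
  define X2 where "X2 = {g \<in> A - insert b D. c = k}"
  define X3 where "X3 = {g \<in> {b}. c + 1 = k}"
  have "finite D" using A D(1) finite_subset by blast
  have "{g \<in> A. f g = k} = X1 \<union> X2 \<union> X3"
    unfolding X1_def X2_def X3_def using D(1) b f by (auto split: if_split_asm)
  moreover have "card X1 = (if c = k + 1 then 2 * (k + 1) else 0)"
  proof (cases "c = k + 1")
    case False
    then have "c - 1 = k \<Longrightarrow> c = 0" by linarith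
    then have "c - 1 = k \<Longrightarrow> D = {}" using D(2) \<open>finite D\<close> by simp
    then show ?thesis using False by (auto simp: X1_def)
  qed (use D(2) in \<open>simp add: X1_def\<close>)
  moreover have "card X2 = (if c = k then card A - 2 * k - 1 else 0)"
  proof -
    have "X2 = (if c = k then A - insert b D else {})" by (auto simp: X2_def)
    moreover have "card (A - insert b D) = card A - card (insert b D)"
      using A D(1) b \<open>finite D\<close> by (intro card_Diff_subset) auto
    ultimately show ?thesis using D(2) b \<open>finite D\<close> by simp
  qed
  moreover have "card X3 = (if c + 1 = k then 1 else 0)" by (simp add: X3_def)
  moreover have "finite X1" "finite X2" "finite X3" "X1 \<inter> X2 = {}" "(X1 \<union> X2) \<inter> X3 = {}"
    using A \<open>finite D\<close> b by (auto simp: X1_def X2_def X3_def)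
  ultimately show ?thesis by (simp add: card_Un_disjoint)
qed

lemma card_gaps_occ21_insert_arc:
  assumes M: "is_matching n M" and n: "1 \<le> n"
  shows "card {g \<in> {0..2*n}. occ21 (insert_arc n g M) = k} =
    (if occ21 M = k + 1 then 2 * (k + 1) else 0) + (if occ21 M = k then 2*n - 2*k else 0) +
    (if occ21 M + 1 = k then 1 else 0)"
proof -
  have MP: "perfect_matching {1..2*n} M" using M by (simp add: is_matching_iff_perfect_matching)
  obtain a b where ab: "(a, b) \<in> M" "a = 2*n \<or> b = 2*n"
    using perfect_matching_coverD[OF MP, of "2*n"] n by auto
  moreover have "1 \<le> a" "a < b" "b \<le> 2*n" using perfect_matching_arcD[OF MP ab(1)] by auto
  ultimately have "b = 2*n" "a = Suc (a - 1)" "a - 1 \<le> 2*n" by auto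
  then obtain g0 where g0: "(Suc g0, 2*n) \<in> M" "g0 \<le> 2*n" using ab(1) by metis
  have "g0 \<notin> occ_gaps M" by (rule last_arc_notin_occ_gaps[OF MP g0(1)]) simp
  moreover have "occ_gaps M \<subseteq> {0..2*n}" using occ_gaps_subset[OF MP] by auto
  moreover have "card (occ_gaps M) = 2 * occ21 M"
    using card_occ_gaps[OF MP perfect_matching_finite[OF _ MP]] occ21_eq_card_occs[OF M] by simp
  ultimately show ?thesis
    using card_level_set_split[where A = "{0..2*n}" and D = "occ_gaps M" and b = g0]
      occ21_insert_arc[OF M _ g0(1)] g0(2) by simp
qed

section \<open>The recurrence and its solution\<close>

definition count_occ21 :: "nat \<Rightarrow> nat \<Rightarrow> nat" where
  "count_occ21 n k = card {M. is_matching n M \<and> occ21 M = k}"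

lemma sum_matchings_occ21_indicator:
  "(\<Sum>M | is_matching n M. if occ21 M = j then c else 0) = c * count_occ21 n j"
  using finite_matchings by (simp add: sum.inter_filter[symmetric] count_occ21_def conj_commute)

lemma count_occ21_Suc:
  assumes "1 \<le> n"
  shows "count_occ21 (Suc n) k =
    2 * (k + 1) * count_occ21 n (k + 1) + (2*n - 2*k) * count_occ21 n k +
    (if 1 \<le> k then count_occ21 n (k - 1) else 0)"
proof -
  have "count_occ21 (Suc n) k =
      (\<Sum>M | is_matching n M. card {g \<in> {0..2*n}. occ21 (insert_arc n g M) = k})"
    unfolding count_occ21_def by (rule card_matchings_Suc)
  also have "\<dots> = (\<Sum>M | is_matching n M. (if occ21 M = k + 1 then 2 * (k + 1) else 0) +
      (if occ21 M = k then 2*n - 2*k else 0) + (if 1 \<le> k then (if occ21 M = k - 1 then 1 else 0) else 0))"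
    using card_gaps_occ21_insert_arc[OF _ assms] by (intro sum.cong) auto
  also have "\<dots> = 2 * (k + 1) * count_occ21 n (k + 1) + (2*n - 2*k) * count_occ21 n k +
      (if 1 \<le> k then count_occ21 n (k - 1) else 0)"
    by (cases "1 \<le> k") (simp_all add: sum.distrib sum_matchings_occ21_indicator)
  finally show ?thesis .
qed

lemma is_matching_1_iff: "is_matching 1 M \<longleftrightarrow> M = {(1, 2)}"
proof
  assume M: "is_matching 1 M"
  then have MP: "perfect_matching {1..2} M" by (simp add: is_matching_iff_perfect_matching)
  then have "M \<subseteq> {(1, 2)}" using perfect_matching_arcD[OF MP] by fastforce
  moreover obtain a b where "(a, b) \<in> M" "a = 1 \<or> b = 1"
    using perfect_matching_coverD[OF MP, of 1] by auto
  ultimately show "M = {(1, 2)}" by auto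
next
  assume "M = {(1, 2)}"
  then show "is_matching 1 M"
    unfolding is_matching_iff_perfect_matching by (intro perfect_matchingI) auto
qed

lemma count_occ21_1: "count_occ21 1 k = (if k = 0 then 1 else 0)"
proof -
  have "occ21 {(1, 2)} = 0" by (simp add: occ21_def)
  moreover have "{M. is_matching 1 M \<and> occ21 M = k} = {M. M = {(1, 2)} \<and> occ21 M = k}"
    by (simp only: is_matching_1_iff)
  ultimately have "{M. is_matching 1 M \<and> occ21 M = k} = (if k = 0 then {{(1, 2)}} else {})"
    by auto
  then show ?thesis by (simp add: count_occ21_def)
qed

(* By count_occ21_closed_form at k = 0, avoiders n counts the 21-avoiding matchings of size n. *)
fun avoiders :: "nat \<Rightarrow> nat" where
  "avoiders 0 = 1"
| "avoiders (Suc 0) = 1"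
| "avoiders (Suc (Suc j)) = 2 * (j + 1) * avoiders (Suc j) + 2 * j * avoiders j"

lemma binomial_avoiders_step:
  "(Suc m choose k) * avoiders (Suc (Suc m) - k) =
    2 * (k + 1) * ((m choose (k + 1)) * avoiders (Suc m - (k + 1))) +
    (2 * Suc m - 2 * k) * ((m choose k) * avoiders (Suc m - k)) +
    (if 1 \<le> k then (m choose (k - 1)) * avoiders (Suc m - (k - 1)) else 0)"
proof (cases "k \<le> m")
  case True
  then obtain d where d: "m = k + d" using le_Suc_ex by blast
  have absorb: "(k + 1) * (m choose (k + 1)) = d * (m choose k)"
    using binomial_absorption[of k m] binomial_absorb_comp[of m k] d by simp
  have pascal: "(Suc m choose k) = (m choose k) + (if 1 \<le> k then m choose (k - 1) else 0)"
    by (cases k) simp_all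
  define B where "B = (if 1 \<le> k then (m choose (k - 1)) * avoiders (d + 2) else 0)"
  have "(Suc m choose k) * avoiders (Suc (Suc m) - k) = (m choose k) * avoiders (d + 2) + B"
    unfolding pascal B_def using d by (simp add: algebra_simps)
  also have "\<dots> = 2 * (d * (m choose k)) * avoiders d + (2 * d + 2) * (m choose k) * avoiders (d + 1) + B"
    by (simp add: numeral_2_eq_2 algebra_simps)
  also have "\<dots> = 2 * (k + 1) * ((m choose (k + 1)) * avoiders (Suc m - (k + 1))) +
    (2 * Suc m - 2 * k) * ((m choose k) * avoiders (Suc m - k)) +
    (if 1 \<le> k then (m choose (k - 1)) * avoiders (Suc m - (k - 1)) else 0)"
    unfolding absorb[symmetric] B_def using d by (simp add: algebra_simps)
  finally show ?thesis .
next
  case False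
  then consider "k = Suc m" | "Suc m < k" by linarith
  then show ?thesis by cases (simp_all add: binomial_eq_0)
qed

lemma count_occ21_closed_form: "count_occ21 (Suc m) k = (m choose k) * avoiders (Suc m - k)"
proof (induction m arbitrary: k)
  case 0
  then show ?case by (cases k) (simp_all add: count_occ21_1[unfolded One_nat_def])
next
  case (Suc m)
  then show ?case by (simp only: count_occ21_Suc[of "Suc m"] binomial_avoiders_step)
qed

lemma a1_Suc: "a1 (Suc m) = m * avoiders m"
  using count_occ21_closed_form[of m 1] by (simp add: a1_def count_occ21_def)

theorem corollary3:
  shows "a1 1 = 0 \<and> a1 2 = 1 \<and> (\<forall>n\<ge>2. a1 (n + 1) = 2 * n * (a1 n + a1 (n - 1)))"
proof (intro conjI allI impI)
  show "a1 1 = 0" using a1_Suc[of 0] by simp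
  show "a1 2 = 1" using a1_Suc[of 1] by (simp add: numeral_2_eq_2)
  fix n :: nat assume "n \<ge> 2"
  then obtain j where j: "n = Suc (Suc j)" by (metis add_2_eq_Suc le_Suc_ex)
  have "a1 (n + 1) = n * (2 * (j + 1) * avoiders (Suc j) + 2 * j * avoiders j)"
    using a1_Suc[of n] j by simp
  also have "\<dots> = 2 * n * (a1 n + a1 (n - 1))"
    using a1_Suc[of "Suc j"] a1_Suc[of j] j by (simp add: algebra_simps)
  finally show "a1 (n + 1) = 2 * n * (a1 n + a1 (n - 1))" .
qed

end
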